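(* For every positive integer $n$, $$\int_0^1 \ln \left(1-\sqrt{x}\right) P_{n}(2 x-1) \, dx=\frac{(-1)^n - 4 n - 2}{2 n (n + 1) (2 n + 1)}.$$
   Context: $P_n$ denotes the $n$-th Legendre polynomial, $P_n(x) = \frac{1}{2^n n!}\frac{d^n}{dx^n}(x^2-1)^n$. *)

theory Defs
  imports "HOL-Analysis.Analysis" "HOL-Computational_Algebra.Polynomial"
begin

definition legendre :: "nat \<Rightarrow> real poly" where
  "legendre n = smult (1 / (2 ^ n * fact n)) ((pderiv ^^ n) ([:-1, 0, 1:] ^ n))"

end

(*
  With N = n(n+1), Legendre's equation ((y^2 - 1) P_n')' = N P_n shows that P_n(2x - 1) is the
  x-derivative of (x - 1)(1 + y) P_n'(y) / N at y = 2x - 1. Integrating by parts against ln(1 - sqrt x)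
  (the boundary terms vanish since (1 - sqrt x) ln(1 - sqrt x) -> 0) and substituting x = t^2 turns the
  integral into -(2/N) int_0^1 (t^2 + t^3) P_n'(2t^2 - 1) dt. Further integrations by parts reduce these
  moments to int_0^1 t P_n(2t^2 - 1) dt = 1/4 int_{-1}^1 P_n = 0 and to
  int_0^1 P_n(2t^2 - 1) dt = (-1)^n / (2n + 1), which follows by induction from the recurrence
  P_{n+2}' = (2n + 3) P_{n+1} + P_n'.
*)

theory Submission
  imports Defs "HOL-Real_Asymp.Real_Asymp"
begin

lemma higher_pderiv_mult_quadratic:
  fixes a v :: "'a::idom poly"
  assumes "pderiv (pderiv (pderiv a)) = 0"
  shows "(pderiv ^^ Suc (Suc k)) (a * v) = a * (pderiv ^^ Suc (Suc k)) v
           + smult (of_nat (Suc (Suc k))) (pderiv a * (pderiv ^^ Suc k) v)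
           + smult (of_nat (Suc (Suc k) choose 2)) (pderiv (pderiv a) * (pderiv ^^ k) v)"
proof (induction k)
  case 0
  show ?case
    by (simp add: pderiv_mult pderiv_add numeral_2_eq_2 algebra_simps
        flip: of_nat_mult_conv_smult numeral_mult_conv_smult)
next
  case (Suc k)
  have choose: "(Suc (Suc (Suc k)) choose 2) = Suc (Suc k) + (Suc (Suc k) choose 2)"
    by (simp add: numeral_2_eq_2)
  have "(pderiv ^^ Suc (Suc (Suc k))) (a * v) = pderiv ((pderiv ^^ Suc (Suc k)) (a * v))"
    by simp
  also have "\<dots> = a * (pderiv ^^ Suc (Suc (Suc k))) v
           + smult (of_nat (Suc (Suc (Suc k)))) (pderiv a * (pderiv ^^ Suc (Suc k)) v)
           + smult (of_nat (Suc (Suc (Suc k)) choose 2)) (pderiv (pderiv a) * (pderiv ^^ Suc k) v)"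
    unfolding Suc.IH choose
    by (simp add: pderiv_add pderiv_mult pderiv_smult assms smult_add_left smult_add_right
        algebra_simps flip: numeral_mult_conv_smult)
  finally show ?case .
qed

lemma sq_minus_one_mult_pderiv_power:
  "[:-1, 0, 1:] * pderiv ([:-1, 0, 1:] ^ n) = smult (2 * real n) ([:0, 1:] * [:-1, 0, 1:] ^ n)"
proof (cases n)
  case (Suc m)
  show ?thesis
    unfolding Suc pderiv_power_Suc by (simp add: pderiv_pCons algebra_simps)
qed simp

lemma pderiv_pderiv_sq_minus_one_power:
  "pderiv (pderiv ([:-1, 0, 1:] ^ Suc (Suc k))) =
     smult (2 * (real k + 2) * (2 * real k + 3)) ([:-1, 0, 1:] ^ Suc k)
     + smult (4 * (real k + 1) * (real k + 2)) ([:-1, 0, 1:] ^ k)"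
proof -
  \<comment> \<open>An opaque name keeps the simplifier from multiplying out products with \<open>[:-1, 0, 1:]\<close>.\<close>
  define u :: "real poly" where "u = [:-1, 0, 1:]"
  have du: "pderiv u = [:0, 2:]" and pu: "poly u x = x\<^sup>2 - 1" for x
    by (simp_all add: u_def pderiv_pCons power2_eq_square)
  have "pderiv (pderiv (u ^ Suc (Suc k))) =
     smult (2 * (real k + 2) * (2 * real k + 3)) (u ^ Suc k)
     + smult (4 * (real k + 1) * (real k + 2)) (u ^ k)"
    by (simp only: pderiv_power_Suc pderiv_mult pderiv_smult du)
       (intro poly_ext, simp add: pu pderiv_pCons algebra_simps power2_eq_square)
  then show ?thesis
    by (simp only: u_def)
qed

lemma legendre_0 [simp]: "legendre 0 = 1"
  by (simp add: legendre_def)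

lemma legendre_1 [simp]: "legendre 1 = [:0, 1:]"
  by (simp add: legendre_def pderiv_pCons)

lemma rodrigues_ode:
  fixes n :: nat and W :: "real poly"
  defines "W \<equiv> (pderiv ^^ n) ([:-1, 0, 1:] ^ n)"
  shows "pderiv ([:-1, 0, 1:] * pderiv W) = smult (real n * (real n + 1)) W"
proof -
  define u :: "real poly" where "u = [:-1, 0, 1:]"
  have du: "pderiv u = [:0, 2:]" and pu: "poly u x = x\<^sup>2 - 1" for x
    by (simp_all add: u_def pderiv_pCons power2_eq_square)
  have W_u: "W = (pderiv ^^ n) (u ^ n)"
    by (simp only: W_def u_def)
  have "pderiv (u * pderiv W) = smult (real n * (real n + 1)) W"
  proof (cases n)
    case (Suc m)
    have W_Suc: "(pderiv ^^ Suc m) (u ^ n) = W"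
      by (simp only: W_u Suc)
    then have W_Suc_Suc: "(pderiv ^^ Suc (Suc m)) (u ^ n) = pderiv W"
      by (simp only: funpow.simps(2) o_apply)
    have W_pderiv: "(pderiv ^^ m) (pderiv (u ^ n)) = W"
      by (simp only: funpow_swap1[symmetric] W_Suc[symmetric] funpow.simps(2) o_apply)
    then have W_pderiv_Suc: "(pderiv ^^ Suc m) (pderiv (u ^ n)) = pderiv W"
      and W_pderiv_Suc_Suc: "(pderiv ^^ Suc (Suc m)) (pderiv (u ^ n)) = pderiv (pderiv W)"
      by simp_all
    \<comment> \<open>Differentiate \<open>u * pderiv (u ^ n) = 2n x u ^ n\<close> \<open>n + 1\<close> times by Leibniz's rule.\<close>
    have "(pderiv ^^ Suc (Suc m)) (u * pderiv (u ^ n))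
        = u * pderiv (pderiv W) + smult (of_nat (Suc (Suc m))) ([:0, 2:] * pderiv W)
          + smult (of_nat (Suc (Suc m) choose 2)) ([:2:] * W)"
      using higher_pderiv_mult_quadratic[of u m "pderiv (u ^ n)"]
      by (simp only: W_pderiv W_pderiv_Suc W_pderiv_Suc_Suc) (simp add: du pderiv_pCons)
    moreover have "(pderiv ^^ Suc (Suc m)) ([:0, 1:] * u ^ n)
        = [:0, 1:] * pderiv W + smult (of_nat (Suc (Suc m))) W"
      using higher_pderiv_mult_quadratic[of "[:0, 1:]" m "u ^ n"]
      by (simp only: W_Suc W_Suc_Suc) (simp add: pderiv_pCons)
    ultimately have leibniz: "u * pderiv (pderiv W) + smult (of_nat (Suc (Suc m))) ([:0, 2:] * pderiv W)
          + smult (of_nat (Suc (Suc m) choose 2)) ([:2:] * W)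
        = smult (2 * real n) ([:0, 1:] * pderiv W + smult (of_nat (Suc (Suc m))) W)"
      by (simp only: u_def sq_minus_one_mult_pderiv_power higher_pderiv_smult)
    have "2 * (Suc (Suc m) choose 2) = Suc (Suc m) * Suc m"
      by (induction m) (simp_all add: numeral_2_eq_2)
    then have choose: "real (Suc (Suc m) choose 2) = real n * (real n + 1) / 2"
      unfolding Suc by (simp add: field_simps flip: of_nat_mult)
    show ?thesis
    proof (intro poly_ext)
      fix x
      from arg_cong[OF leibniz, of "\<lambda>p. poly p x"]
      show "poly (pderiv (u * pderiv W)) x = poly (smult (real n * (real n + 1)) W) x"
        by (simp add: pderiv_mult du pu pderiv_pCons choose Suc algebra_simps) (simp add: field_simps)
    qed
  qed (simp add: W_u)
  then show ?thesis
    by (simp only: u_def)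
qed

lemma legendre_ode:
  "pderiv ([:-1, 0, 1:] * pderiv (legendre n)) = smult (real n * (real n + 1)) (legendre n)"
  unfolding legendre_def pderiv_smult mult_smult_right rodrigues_ode
  by (simp only: smult_smult mult.commute)

lemma pderiv_legendre_Suc_Suc:
  "pderiv (legendre (Suc (Suc k))) = smult (2 * real k + 3) (legendre (Suc k)) + pderiv (legendre k)"
proof -
  define u :: "real poly" where "u = [:-1, 0, 1:]"
  have c1: "1 / (2 ^ Suc (Suc k) * fact (Suc (Suc k))) * (2 * (real k + 2) * (2 * real k + 3))
      = (2 * real k + 3) * (1 / (2 ^ Suc k * fact (Suc k)))"
    and c2: "1 / (2 ^ Suc (Suc k) * fact (Suc (Suc k))) * (4 * (real k + 1) * (real k + 2))
      = 1 / (2 ^ k * fact k)"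
    by (simp_all add: divide_simps) (simp_all add: algebra_simps)
  have "pderiv (legendre (Suc (Suc k)))
      = smult (1 / (2 ^ Suc (Suc k) * fact (Suc (Suc k))))
          ((pderiv ^^ Suc k) (pderiv (pderiv (u ^ Suc (Suc k)))))"
    by (simp add: legendre_def u_def pderiv_smult funpow_swap1)
  also have "\<dots> =
        smult (1 / (2 ^ Suc (Suc k) * fact (Suc (Suc k))) * (2 * (real k + 2) * (2 * real k + 3)))
        ((pderiv ^^ Suc k) (u ^ Suc k))
      + smult (1 / (2 ^ Suc (Suc k) * fact (Suc (Suc k))) * (4 * (real k + 1) * (real k + 2)))
        ((pderiv ^^ Suc k) (u ^ k))"
    by (simp only: u_def pderiv_pderiv_sq_minus_one_power higher_pderiv_add higher_pderiv_smult
        smult_add_right smult_smult)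
  also have "\<dots> = smult (2 * real k + 3) (legendre (Suc k)) + pderiv (legendre k)"
    unfolding c1 c2 legendre_def u_def[symmetric]
    by (simp only: funpow.simps(2) o_apply pderiv_smult smult_smult)
  finally show ?thesis .
qed

lemma poly_pderiv_legendre_one:
  "poly (pderiv (legendre n)) 1 = real n * (real n + 1) / 2 * poly (legendre n) 1"
  using arg_cong[OF legendre_ode[of n], of "\<lambda>p. poly p 1"]
  by (simp only: pderiv_mult) (simp add: pderiv_pCons)

lemma poly_legendre_one [simp]: "poly (legendre n) 1 = 1"
proof (induction n rule: induct_nat_012)
  case (ge2 k)
  have "(real k + 2) * (real k + 3) / 2 * poly (legendre (Suc (Suc k))) 1
      = (real k + 2) * (real k + 3) / 2"
    using arg_cong[OF pderiv_legendre_Suc_Suc[of k], of "\<lambda>p. poly p 1"] ge2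
    by (simp add: poly_pderiv_legendre_one field_simps)
  then show ?case
    by simp
qed (simp_all add: legendre_1[unfolded One_nat_def])

definition sq_moment :: "nat \<Rightarrow> real poly \<Rightarrow> real" where
  "sq_moment k p = integral {0..1} (\<lambda>t. t ^ k * poly p (2 * t\<^sup>2 - 1))"

lemma has_integral_sq_moment:
  "((\<lambda>t. t ^ k * poly p (2 * t\<^sup>2 - 1)) has_integral sq_moment k p) {0..1}"
  unfolding sq_moment_def by (intro integrable_integral integrable_continuous_interval continuous_intros)

lemma sq_moment_add: "sq_moment k (p + q) = sq_moment k p + sq_moment k q"
  using has_integral_add[OF has_integral_sq_moment[of k p] has_integral_sq_moment[of k q]]
  by (intro has_integral_unique[OF has_integral_sq_moment[of k "p + q"]]) (simp add: algebra_simps)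

lemma sq_moment_smult: "sq_moment k (smult c p) = c * sq_moment k p"
  using has_integral_mult_right[OF has_integral_sq_moment[of k p], of c]
  by (intro has_integral_unique[OF has_integral_sq_moment[of k "smult c p"]]) (simp add: algebra_simps)

lemma sq_moment_one_plus_mult: "sq_moment k ([:1, 1:] * p) = 2 * sq_moment (k + 2) p"
  using has_integral_mult_right[OF has_integral_sq_moment[of "k + 2" p], of 2]
  by (intro has_integral_unique[OF has_integral_sq_moment[of k "[:1, 1:] * p"]])
     (simp add: power_add power2_eq_square algebra_simps)

lemma has_integral_deriv_01:
  assumes "\<And>t. (f has_real_derivative f' t) (at t)"
  shows "(f' has_integral (f 1 - f 0)) {0..(1::real)}"
  by (rule fundamental_theorem_of_calculus)
     (auto simp: has_real_derivative_iff_has_vector_derivative[symmetric]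
       intro!: has_field_derivative_at_within assms)

lemma has_real_derivative_poly_sq:
  "((\<lambda>t. poly p (2 * t\<^sup>2 - 1)) has_real_derivative
     4 * t * poly (pderiv p) (2 * t\<^sup>2 - 1)) (at t)"
  by (rule DERIV_chain'[OF _ poly_DERIV, THEN DERIV_cong]) (auto intro!: derivative_eq_intros)

lemma sq_moment_pderiv:
  "real (k + 1) * sq_moment k p + 4 * sq_moment (k + 2) (pderiv p) = poly p 1"
proof -
  have d: "((\<lambda>t. t ^ (k + 1) * poly p (2 * t\<^sup>2 - 1)) has_real_derivative
      real (k + 1) * (t ^ k * poly p (2 * t\<^sup>2 - 1))
      + 4 * (t ^ (k + 2) * poly (pderiv p) (2 * t\<^sup>2 - 1))) (at t)"
    for t
    by (rule DERIV_mult[OF DERIV_pow has_real_derivative_poly_sq, THEN DERIV_cong])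
       (simp add: algebra_simps power2_eq_square)
  have "((\<lambda>t. real (k + 1) * (t ^ k * poly p (2 * t\<^sup>2 - 1))
        + 4 * (t ^ (k + 2) * poly (pderiv p) (2 * t\<^sup>2 - 1)))
      has_integral real (k + 1) * sq_moment k p + 4 * sq_moment (k + 2) (pderiv p)) {0..1}"
    by (intro has_integral_add has_integral_mult_right has_integral_sq_moment)
  from has_integral_unique[OF this has_integral_deriv_01[OF d]] show ?thesis
    by simp
qed

lemma sq_moment_1_pderiv: "4 * sq_moment 1 (pderiv p) = poly p 1 - poly p (-1)"
proof -
  have "((\<lambda>t. poly p (2 * t\<^sup>2 - 1)) has_real_derivative
      4 * (t ^ 1 * poly (pderiv p) (2 * t\<^sup>2 - 1))) (at t)" for t
    using has_real_derivative_poly_sq[of p t] by (simp add: algebra_simps)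
  from has_integral_unique[OF has_integral_mult_right[OF has_integral_sq_moment]
      has_integral_deriv_01[OF this]]
  show ?thesis by simp
qed

lemma sq_moment_0_pderiv_sq_minus_one_mult:
  "sq_moment 0 (pderiv ([:-1, 0, 1:] * p)) = sq_moment 2 p - sq_moment 0 p"
proof -
  define q where "q = [:-1, 0, 1:] * pderiv p + [:0, 2:] * p"
  have "pderiv ([:-1, 0, 1:] * p) = q"
    unfolding q_def by (simp only: pderiv_mult) (simp add: pderiv_pCons)
  moreover have "((\<lambda>t. (t * (t\<^sup>2 - 1)) * poly p (2 * t\<^sup>2 - 1)) has_real_derivative
      t ^ 0 * poly q (2 * t\<^sup>2 - 1) - t\<^sup>2 * poly p (2 * t\<^sup>2 - 1)
      + t ^ 0 * poly p (2 * t\<^sup>2 - 1)) (at t)" for t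
    by (rule DERIV_mult[OF _ has_real_derivative_poly_sq, THEN DERIV_cong])
       (auto intro!: derivative_eq_intros simp: q_def algebra_simps power2_eq_square power3_eq_cube)
  note has_integral_unique[OF has_integral_add[OF has_integral_diff] has_integral_deriv_01[OF this],
      OF has_integral_sq_moment has_integral_sq_moment has_integral_sq_moment]
  ultimately show ?thesis
    by simp
qed

lemma sq_moment_1_legendre:
  assumes "n \<ge> 1"
  shows "sq_moment 1 (legendre n) = 0"
proof -
  have "4 * (real n * (real n + 1) * sq_moment 1 (legendre n))
      = poly ([:-1, 0, 1:] * pderiv (legendre n)) 1 - poly ([:-1, 0, 1:] * pderiv (legendre n)) (-1)"
    using sq_moment_1_pderiv[of "[:-1, 0, 1:] * pderiv (legendre n)"]
    by (simp only: legendre_ode sq_moment_smult)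
  then show ?thesis
    using assms by simp
qed

lemma sq_moment_0_pderiv_legendre:
  "sq_moment 0 (pderiv (legendre n))
     = (1 - sq_moment 0 (legendre n)) / 4 - real n * (real n + 1) * sq_moment 0 (legendre n)"
  using sq_moment_pderiv[of 0 "legendre n"]
    sq_moment_0_pderiv_sq_minus_one_mult[of "pderiv (legendre n)"]
  unfolding legendre_ode sq_moment_smult by (simp add: numeral_2_eq_2)

lemma sq_moment_0_legendre_recurrence:
  "(2 * real k + 5)\<^sup>2 * sq_moment 0 (legendre (Suc (Suc k)))
     = (2 * real k + 1)\<^sup>2 * sq_moment 0 (legendre k)
       - 4 * (2 * real k + 3) * sq_moment 0 (legendre (Suc k))"
  using arg_cong[OF pderiv_legendre_Suc_Suc[of k], of "sq_moment 0"]
  unfolding sq_moment_add sq_moment_smult sq_moment_0_pderiv_legendre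
  by (simp add: field_simps power2_eq_square)

lemma sq_moment_0_legendre: "sq_moment 0 (legendre n) = (-1) ^ n / (2 * real n + 1)"
proof (induction n rule: induct_nat_012)
  case 0
  show ?case
    by (simp add: sq_moment_def)
next
  case 1
  have "sq_moment 0 [:1:] = 1"
    by (simp add: sq_moment_def)
  then show ?case
    using sq_moment_0_pderiv_legendre[of 1]
    by (simp add: pderiv_pCons legendre_1[unfolded One_nat_def] field_simps)
next
  case (ge2 k)
  have "(2 * real k + 1)\<^sup>2 * ((-1) ^ k / (2 * real k + 1)) = (2 * real k + 1) * (-1) ^ k"
    by (simp add: power2_eq_square)
  moreover have "4 * (2 * real k + 3) * ((-1) ^ Suc k / (2 * real (Suc k) + 1)) = - 4 * (-1) ^ k"
    by (simp add: field_simps)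
  ultimately have "(2 * real k + 5) * ((2 * real k + 5) * sq_moment 0 (legendre (Suc (Suc k))))
      = (2 * real k + 5) * (-1) ^ k"
    using sq_moment_0_legendre_recurrence[of k] unfolding ge2
    by (simp add: algebra_simps power2_eq_square)
  then have "(2 * real k + 5) * sq_moment 0 (legendre (Suc (Suc k))) = (-1) ^ k"
    by (subst (asm) mult_cancel_left) linarith
  then show ?case
    by (simp add: field_simps)
qed

lemma sq_moment_2_pderiv_legendre:
  "sq_moment 2 (pderiv (legendre n)) = (1 - (-1) ^ n / (2 * real n + 1)) / 4"
  using sq_moment_pderiv[of 0 "legendre n"] by (simp add: sq_moment_0_legendre del: add_2_eq_Suc')

lemma sq_moment_3_pderiv_legendre:
  assumes "n \<ge> 1"
  shows "sq_moment 3 (pderiv (legendre n)) = 1 / 4"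
  using sq_moment_pderiv[of 1 "legendre n"] sq_moment_1_legendre[OF assms] by (simp del: add_2_eq_Suc')

lemma continuous_on_mult_ln: "continuous_on {0..} (\<lambda>s::real. s * ln s)"
  unfolding continuous_on_eq_continuous_within
proof
  fix s :: real
  assume "s \<in> {0..}"
  show "continuous (at s within {0..}) (\<lambda>s. s * ln s)"
  proof (cases "s = 0")
    case True
    have "((\<lambda>s::real. s * ln s) \<longlongrightarrow> 0) (at_right 0)"
      by real_asymp
    then show ?thesis
      using True by (simp add: continuous_within at_within_Ici_at_right)
  next
    case False
    with \<open>s \<in> {0..}\<close> have "isCont (\<lambda>s. s * ln s) s"
      by (intro continuous_intros) auto
    then show ?thesis
      by (rule continuous_at_imp_continuous_within)
  qed
qed

lemma continuous_on_ln_one_minus_sqrt_mult: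
  assumes "continuous_on {0..1} f"
  shows "continuous_on {0..1} (\<lambda>x. ln (1 - sqrt x) * ((1 - x) * f x))"
proof -
  have "continuous_on {0..1} (\<lambda>x. (1 - sqrt x) * ln (1 - sqrt x))"
    by (rule continuous_on_compose2[OF continuous_on_mult_ln]) (intro continuous_intros, auto)
  then have "continuous_on {0..1} (\<lambda>x. ((1 - sqrt x) * ln (1 - sqrt x)) * ((1 + sqrt x) * f x))"
    by (rule continuous_on_mult) (intro continuous_intros assms)
  then show ?thesis
  proof (rule continuous_on_eq)
    fix x :: real
    assume "x \<in> {0..1}"
    then have "(1 - sqrt x) * (1 + sqrt x) = 1 - x"
      by (simp add: algebra_simps)
    then show "((1 - sqrt x) * ln (1 - sqrt x)) * ((1 + sqrt x) * f x)
        = ln (1 - sqrt x) * ((1 - x) * f x)"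
      by (metis mult.assoc mult.left_commute)
  qed
qed

lemma has_real_derivative_ln_one_minus_sqrt:
  assumes "0 < x" "x < 1"
  shows "((\<lambda>x. ln (1 - sqrt x)) has_real_derivative
           - inverse (2 * sqrt x * (1 - sqrt x))) (at x)"
  using assms by (auto intro!: derivative_eq_intros simp: field_simps)

lemma has_integral_ln_one_minus_sqrt_antiderivative:
  assumes H: "\<And>s. s \<in> {0..1} \<Longrightarrow>
    (H has_real_derivative (1 + s) * poly r (2 * s\<^sup>2 - 1)) (at s within {0..1})"
  shows "((\<lambda>x. ln (1 - sqrt x) * poly (pderiv ([:-1, 1:] * r)) (2 * x - 1))
           has_integral H 0 - H 1) {0..1}"
proof -
  define Q where "Q = [:-1, 1:] * r"
  define F where "F x = ln (1 - sqrt x) * (poly Q (2 * x - 1) / 2) - H (sqrt x)" for x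
  have Q_half: "poly Q (2 * x - 1) / 2 = (1 - x) * - poly r (2 * x - 1)" for x
    by (simp add: Q_def field_simps)
  have "continuous_on {0..1} H"
    unfolding continuous_on_eq_continuous_within using H DERIV_continuous by blast
  then have "continuous_on {0..1} (\<lambda>x. H (sqrt x))"
    by (rule continuous_on_compose2) (intro continuous_intros, auto)
  then have F_cont: "continuous_on {0..1} F"
    unfolding F_def Q_half
    by (intro continuous_on_diff continuous_on_ln_one_minus_sqrt_mult) (auto intro!: continuous_intros)
  have F_deriv: "(F has_real_derivative ln (1 - sqrt x) * poly (pderiv Q) (2 * x - 1)) (at x)"
    if "x \<in> {0<..<1}" for x
  proof -
    define s where "s = sqrt x"
    have s: "0 < s" "s < 1"
      using that by (auto simp: s_def)
    have x: "x = s\<^sup>2"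
      using that by (simp add: s_def)
    have d_sqrt: "(sqrt has_real_derivative inverse s / 2) (at x)"
      unfolding s_def using that by (intro DERIV_real_sqrt) auto
    have d_ln: "((\<lambda>x. ln (1 - sqrt x)) has_real_derivative - inverse (2 * s * (1 - s))) (at x)"
      unfolding s_def using that by (intro has_real_derivative_ln_one_minus_sqrt) auto
    have d_Q: "((\<lambda>x. poly Q (2 * x - 1) / 2) has_real_derivative
        poly (pderiv Q) (2 * x - 1)) (at x)"
      by (auto intro!: derivative_eq_intros DERIV_chain2[OF poly_DERIV])
    have d_H: "(H has_real_derivative (1 + s) * poly r (2 * s\<^sup>2 - 1)) (at s)"
      using H[of s] s at_within_interior[of s "{0..1}"] by auto
    have "(F has_real_derivative ln (1 - s) * poly (pderiv Q) (2 * x - 1)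
        + - inverse (2 * s * (1 - s)) * (poly Q (2 * x - 1) / 2)
        - (1 + s) * poly r (2 * s\<^sup>2 - 1) * (inverse s / 2)) (at x)"
      unfolding F_def s_def
      by (intro DERIV_diff DERIV_mult' DERIV_chain2 d_ln[unfolded s_def] d_Q
          d_H[unfolded s_def] d_sqrt[unfolded s_def])
    moreover have "- inverse (2 * s * (1 - s)) * (poly Q (2 * x - 1) / 2)
        - (1 + s) * poly r (2 * s\<^sup>2 - 1) * (inverse s / 2) = 0"
      using s unfolding x Q_half by (simp add: field_simps power2_eq_square)
    ultimately show ?thesis
      unfolding s_def by (metis add.right_neutral add_diff_eq)
  qed
  have "((\<lambda>x. ln (1 - sqrt x) * poly (pderiv Q) (2 * x - 1)) has_integral F 1 - F 0) {0..1}"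
    by (rule fundamental_theorem_of_calculus_interior[OF _ F_cont])
       (auto simp: has_real_derivative_iff_has_vector_derivative[symmetric] intro!: F_deriv)
  then show ?thesis
    by (simp add: F_def Q_def)
qed

lemma has_integral_ln_one_minus_sqrt:
  "((\<lambda>x. ln (1 - sqrt x) * poly (pderiv ([:-1, 1:] * r)) (2 * x - 1))
     has_integral - (sq_moment 0 r + sq_moment 1 r)) {0..1}"
proof -
  define G where "G t = (1 + t) * poly r (2 * t\<^sup>2 - 1)" for t :: real
  have "continuous_on {0..1} G"
    unfolding G_def by (intro continuous_intros)
  then have "((\<lambda>s. integral {0..s} G) has_real_derivative G s) (at s within {0..1})"
    if "s \<in> {0..1}" for s
    using integral_has_real_derivative that by blast
  moreover have "integral {0..1} G = sq_moment 0 r + sq_moment 1 r"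
    unfolding G_def
    by (intro integral_unique has_integral_add[OF has_integral_sq_moment[of 0]
          has_integral_sq_moment[of 1], THEN has_integral_eq[rotated]])
       (simp add: algebra_simps)
  ultimately show ?thesis
    using has_integral_ln_one_minus_sqrt_antiderivative[of "\<lambda>s. integral {0..s} G" r]
    by (simp add: G_def)
qed

theorem mainTheorem8:
  fixes n :: nat
  assumes "n \<ge> 1"
  shows "((\<lambda>x::real. ln (1 - sqrt x) * poly (legendre n) (2 * x - 1)) has_integral
           (((-1) ^ n - 4 * real n - 2) / (2 * real n * (real n + 1) * (2 * real n + 1)))) {0..1}"
proof -
  define N where "N = real n * (real n + 1)"
  define r where "r = smult (1 / N) ([:1, 1:] * pderiv (legendre n))"
  have "[:-1, 1:] * [:1, 1:] = [:-1, 0, 1 :: real:]"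
    by simp
  then have r_mult: "[:-1, 1:] * r = smult (1 / N) ([:-1, 0, 1:] * pderiv (legendre n))"
    by (simp only: r_def mult_smult_right mult.assoc[symmetric])
  have pderiv_r: "pderiv ([:-1, 1:] * r) = legendre n"
    unfolding r_mult pderiv_smult legendre_ode using assms by (simp add: N_def)
  have "sq_moment 0 r + sq_moment 1 r
      = 2 / N * (sq_moment 2 (pderiv (legendre n)) + sq_moment 3 (pderiv (legendre n)))"
    unfolding r_def sq_moment_smult sq_moment_one_plus_mult
    by (simp add: algebra_simps del: add_2_eq_Suc')
  also have "\<dots> = 2 / N * ((1 - (-1) ^ n / (2 * real n + 1)) / 4 + 1 / 4)"
    unfolding sq_moment_2_pderiv_legendre sq_moment_3_pderiv_legendre[OF assms] ..
  also have "\<dots> = - (((-1) ^ n - 4 * real n - 2) / (2 * real n * (real n + 1) * (2 * real n + 1)))"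
    using assms by (simp add: N_def divide_simps) (simp add: algebra_simps)
  finally show ?thesis
    using has_integral_ln_one_minus_sqrt[of r] unfolding pderiv_r by simp
qed

end
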